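(* Let $(G,+)$ be an abelian group with identity $0$. Let $M$ be a matroid over $G$ and let $N$ be a paving matroid over $G$, both of rank $n$, such that $|E(M)|=|E(N)|=n+1<p(G)$. Assume there exists a total order $\preceq$ on $E(M)\cup E(N)\cup (E(M)+E(N))\cup\{0\}$ that is compatible with the group structure of $G$, such that $E(M)$ and $E(N)$ are both positive, and $\max(E(M))\notin E(M)+E(N)$. Then $M$ is matched to $N$.
   Context: $p(G)$ denotes the smallest cardinality of a nonzero subgroup of $G$. $A+B=\{a+b: a\in A, b\in B\}$. A total order $\preceq$ on a subset $A\subseteq G$ is compatible with the group structure if for all $a,b,c\in A$, $a\preceq b$ implies $a+c\preceq b+c$. With respect to such an order on a set containing $0$, an element $x$ is positive if $0\prec x$ (i.e. $0\preceq x$ and $x\ne 0$), and a set is positive if all its elements are positive. A matroid over $G$ is a matroid $M$ whose finite ground set $E(M)$ is a subset of $G$; all matroids are assumed loopless. A matroid of rank $n$ is paving if every $(n-1)$-element subset of its ground set is independent. For matroids $M,N$ over $G$ with $r(M)=r(N)=n>0$ and bases $\mathcal{M}=\{a_1,\dots,a_n\}$ of $M$ and $\mathcal{N}=\{b_1,\dots,b_n\}$ of $N$, $\mathcal{M}$ is matched to $\mathcal{N}$ if there is a permutation $\pi\in S_n$ with $a_i+b_{\pi(i)}\notin E(M)$ for all $i$. $M$ is matched to $N$ if for every basis $\mathcal{M}$ of $M$ there exists a basis $\mathcal{N}$ of $N$ such that $\mathcal{M}$ is matched to $\mathcal{N}$. *)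

theory Defs
  imports Main "HOL-Library.Extended_Nat"
begin

definition sumset :: "'a::ab_group_add set \<Rightarrow> 'a set \<Rightarrow> 'a set" where
  "sumset A B = {a + b | a b. a \<in> A \<and> b \<in> B}"

definition is_subgroup :: "'a::ab_group_add set \<Rightarrow> bool" where
  "is_subgroup H \<longleftrightarrow> 0 \<in> H \<and> (\<forall>x\<in>H. \<forall>y\<in>H. x + y \<in> H) \<and> (\<forall>x\<in>H. - x \<in> H)"

(* p(G): smallest cardinality of a nonzero subgroup (\<infinity> if none is finite / none exists) *)
definition pG :: "'a::ab_group_add itself \<Rightarrow> enat" where
  "pG _ = (INF H \<in> {H :: 'a set. is_subgroup H \<and> H \<noteq> {0}}.
              (if finite H then enat (card H) else \<infinity>))"

definition matroid :: "'a set \<Rightarrow> ('a set \<Rightarrow> bool) \<Rightarrow> bool" where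
  "matroid E I \<longleftrightarrow> finite E \<and> I {} \<and>
     (\<forall>A. I A \<longrightarrow> A \<subseteq> E) \<and>
     (\<forall>A B. I B \<and> A \<subseteq> B \<longrightarrow> I A) \<and>
     (\<forall>A B. I A \<and> I B \<and> card A < card B \<longrightarrow> (\<exists>x\<in>B - A. I (insert x A)))"

definition loopless :: "'a set \<Rightarrow> ('a set \<Rightarrow> bool) \<Rightarrow> bool" where
  "loopless E I \<longleftrightarrow> (\<forall>x\<in>E. I {x})"

definition mrank :: "'a set \<Rightarrow> ('a set \<Rightarrow> bool) \<Rightarrow> nat" where
  "mrank E I = Max (card ` {A. A \<subseteq> E \<and> I A})"

definition is_basis :: "'a set \<Rightarrow> ('a set \<Rightarrow> bool) \<Rightarrow> 'a set \<Rightarrow> bool" where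
  "is_basis E I B \<longleftrightarrow> B \<subseteq> E \<and> I B \<and> (\<forall>C. C \<subseteq> E \<and> I C \<and> B \<subseteq> C \<longrightarrow> C = B)"

definition paving :: "'a set \<Rightarrow> ('a set \<Rightarrow> bool) \<Rightarrow> bool" where
  "paving E I \<longleftrightarrow> (\<forall>A. A \<subseteq> E \<and> card A = mrank E I - 1 \<longrightarrow> I A)"

definition basis_matched :: "'a::ab_group_add set \<Rightarrow> 'a set \<Rightarrow> 'a set \<Rightarrow> bool" where
  "basis_matched EM BM BN \<longleftrightarrow> (\<exists>f. bij_betw f BM BN \<and> (\<forall>a\<in>BM. a + f a \<notin> EM))"

definition matroid_matched ::
  "'a::ab_group_add set \<Rightarrow> ('a set \<Rightarrow> bool) \<Rightarrow> 'a set \<Rightarrow> ('a set \<Rightarrow> bool) \<Rightarrow> bool" where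
  "matroid_matched EM IM EN IN \<longleftrightarrow>
     (\<forall>BM. is_basis EM IM BM \<longrightarrow> (\<exists>BN. is_basis EN IN BN \<and> basis_matched EM BM BN))"

definition total_order_on :: "'a set \<Rightarrow> ('a \<Rightarrow> 'a \<Rightarrow> bool) \<Rightarrow> bool" where
  "total_order_on S le \<longleftrightarrow>
     (\<forall>x\<in>S. le x x) \<and>
     (\<forall>x\<in>S. \<forall>y\<in>S. le x y \<and> le y x \<longrightarrow> x = y) \<and>
     (\<forall>x\<in>S. \<forall>y\<in>S. \<forall>z\<in>S. le x y \<and> le y z \<longrightarrow> le x z) \<and>
     (\<forall>x\<in>S. \<forall>y\<in>S. le x y \<or> le y x)"

definition compatible_order :: "'a::ab_group_add set \<Rightarrow> ('a \<Rightarrow> 'a \<Rightarrow> bool) \<Rightarrow> bool" where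
  "compatible_order S le \<longleftrightarrow> (\<forall>a\<in>S. \<forall>b\<in>S. \<forall>c\<in>S. le a b \<longrightarrow> le (a + c) (b + c))"

definition positive_set :: "('a::ab_group_add \<Rightarrow> 'a \<Rightarrow> bool) \<Rightarrow> 'a set \<Rightarrow> bool" where
  "positive_set le A \<longleftrightarrow> (\<forall>x\<in>A. le 0 x \<and> x \<noteq> 0)"

end

(*
  Let B be a basis of M and t its greatest element. For b in E(N) the translate t + b lies
  strictly above t, since E(N) is positive; as E(M) - B is a single element, t + b could only
  lie in E(M) as its greatest element, which is excluded. So t can be matched to anything. For the other elements a of E(M), the translates
  a + b that stay in E(M) are distinct elements strictly above a, hence a has at least as many
  admissible partners b as there are elements of E(M) below or equal to a, and choosing partners
  in increasing order of a gives an injective partner map. The n - 1 partners of B - {t} are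
  independent because N is paving, a basis of N containing them has one more element c, and
  t is matched to c.
*)

theory Submission
  imports Defs
begin

lemma total_order_on_ex_greatest:
  assumes "total_order_on S le" "finite A" "A \<noteq> {}" "A \<subseteq> S"
  shows "\<exists>m\<in>A. \<forall>x\<in>A. le x m"
  using assms(2-4)
proof (induction A rule: finite_ne_induct)
  case (singleton x)
  then show ?case using assms(1) unfolding total_order_on_def by blast
next
  case (insert x A)
  then obtain m where "m \<in> A" "\<forall>y\<in>A. le y m" by blast
  with insert.prems assms(1) show ?case
    unfolding total_order_on_def by (metis insert_iff subsetD)
qed

lemma bij_betw_fun_upd_insert:
  assumes "inj_on f A" "x \<notin> A" "y \<notin> f ` A"
  shows "bij_betw (f(x := y)) (insert x A) (insert y (f ` A))"
proof -
  have "f(x := y) ` A = f ` A" using assms(2) by auto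
  moreover have "inj_on (f(x := y)) A" using assms(1,3) by (rule inj_on_fun_updI)
  ultimately show ?thesis using assms(2,3) by (simp add: bij_betw_def)
qed

lemma total_order_on_distinct_representatives:
  assumes "total_order_on S le" "finite A" "A \<subseteq> S"
    and "\<And>a. a \<in> A \<Longrightarrow> card {x\<in>A. le x a} \<le> card (C a)"
  shows "\<exists>f. inj_on f A \<and> (\<forall>a\<in>A. f a \<in> C a)"
  using assms(2-4)
proof (induction A rule: finite_remove_induct)
  case empty
  then show ?case by simp
next
  case (remove A)
  \<comment> \<open>Represent the elements below the greatest one t first; at most card A - 1 of the
    candidates for t are then taken.\<close>
  obtain t where t: "t \<in> A" "\<forall>x\<in>A. le x t"
    using total_order_on_ex_greatest[OF assms(1)] remove.hyps(1,2) remove.prems(1) by blast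
  have "card {x \<in> A - {t}. le x a} \<le> card (C a)" if "a \<in> A - {t}" for a
  proof -
    have "card {x \<in> A - {t}. le x a} \<le> card {x \<in> A. le x a}"
      using remove.hyps(1) by (intro card_mono) auto
    with remove.prems(2) that show ?thesis by fastforce
  qed
  then obtain f where f: "inj_on f (A - {t})" "\<forall>a\<in>A - {t}. f a \<in> C a"
    using remove.IH[OF t(1)] remove.prems(1) by blast
  have "card (f ` (A - {t})) < card A"
    using card_image_le[of "A - {t}" f] remove.hyps(1) t(1) card_Diff1_less[of A t] by fastforce
  also have "card A \<le> card (C t)"
  proof -
    have "{x \<in> A. le x t} = A" using t(2) by blast
    then show ?thesis using remove.prems(2)[OF t(1)] by simp
  qed
  finally have "\<not> C t \<subseteq> f ` (A - {t})"
    using card_mono[of "f ` (A - {t})" "C t"] remove.hyps(1) by fastforce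
  then obtain c where c: "c \<in> C t" "c \<notin> f ` (A - {t})" by blast
  have "bij_betw (f(t := c)) (insert t (A - {t})) (insert c (f ` (A - {t})))"
    by (rule bij_betw_fun_upd_insert[OF f(1) _ c(2)]) simp
  then have "inj_on (f(t := c)) A" using t(1) by (simp add: bij_betw_def insert_absorb)
  moreover have "\<forall>a\<in>A. (f(t := c)) a \<in> C a" using f(2) c(1) by simp
  ultimately show ?case by blast
qed

lemma matroid_finite: "matroid E I \<Longrightarrow> finite E"
  unfolding matroid_def by blast

lemma matroid_indep_subset: "matroid E I \<Longrightarrow> I A \<Longrightarrow> A \<subseteq> E"
  unfolding matroid_def by blast

lemma matroid_augment:
  "matroid E I \<Longrightarrow> I A \<Longrightarrow> I B \<Longrightarrow> card A < card B \<Longrightarrow> \<exists>x\<in>B - A. I (insert x A)"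
  unfolding matroid_def by blast

lemma card_le_mrank:
  assumes "matroid E I" "I A"
  shows "card A \<le> mrank E I"
proof -
  have "A \<subseteq> E" "finite E" using assms matroid_finite matroid_indep_subset by blast+
  then show ?thesis unfolding mrank_def using assms(2) by (intro Max_ge) auto
qed

lemma ex_indep_card_mrank:
  assumes "matroid E I"
  shows "\<exists>A. I A \<and> card A = mrank E I"
proof -
  have "mrank E I \<in> card ` {A. A \<subseteq> E \<and> I A}"
    unfolding mrank_def using assms matroid_finite[OF assms]
    by (intro Max_in) (auto simp: matroid_def)
  then show ?thesis by auto
qed

lemma mrank_pos:
  assumes "matroid E I" "loopless E I" "E \<noteq> {}"
  shows "0 < mrank E I"
proof -
  obtain e where "e \<in> E" using assms(3) by blast
  then have "I {e}" using assms(2) unfolding loopless_def by blast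
  then show ?thesis using card_le_mrank[OF assms(1)] by fastforce
qed

lemma card_basis:
  assumes "matroid E I" "is_basis E I B"
  shows "card B = mrank E I"
proof (rule ccontr)
  have "I B" using assms(2) unfolding is_basis_def by blast
  moreover assume "card B \<noteq> mrank E I"
  ultimately have "card B < mrank E I" using card_le_mrank[OF assms(1)] le_neq_trans by blast
  moreover obtain A where A: "I A" "card A = mrank E I" using ex_indep_card_mrank[OF assms(1)] by blast
  ultimately obtain x where x: "x \<in> A - B" "I (insert x B)"
    using matroid_augment[OF assms(1) \<open>I B\<close> A(1)] by auto
  have "insert x B \<subseteq> E" using matroid_indep_subset[OF assms(1) x(2)] .
  then have "insert x B = B" using assms(2) x(2) unfolding is_basis_def by blast
  then show False using x(1) by blast
qed

lemma is_basis_if_card_mrank: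
  assumes "matroid E I" "I B" "card B = mrank E I"
  shows "is_basis E I B"
  unfolding is_basis_def
proof (intro conjI allI impI)
  show "B \<subseteq> E" using assms(1,2) by (rule matroid_indep_subset)
  show "I B" by fact
  fix C assume C: "C \<subseteq> E \<and> I C \<and> B \<subseteq> C"
  then have "finite C" using matroid_finite[OF assms(1)] finite_subset by blast
  with C show "C = B" using card_le_mrank[OF assms(1)] assms(3) by (metis card_seteq)
qed

lemma indep_extend_to_basis:
  assumes "matroid E I" "I F" "card F + 1 = mrank E I"
  obtains c where "c \<notin> F" "is_basis E I (insert c F)"
proof -
  obtain A where A: "I A" "card A = mrank E I" using ex_indep_card_mrank[OF assms(1)] by blast
  then obtain c where c: "c \<in> A - F" "I (insert c F)"
    using matroid_augment[OF assms(1,2) A(1)] assms(3) by auto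
  have "finite F" using finite_subset[OF matroid_indep_subset[OF assms(1,2)] matroid_finite[OF assms(1)]] .
  then have "card (insert c F) = mrank E I" using c(1) assms(3) by simp
  then show thesis using c is_basis_if_card_mrank[OF assms(1) c(2)] by (intro that) auto
qed

lemma basis_matched_insert:
  assumes "inj_on f A" "t \<notin> A" "c \<notin> f ` A" "\<forall>a\<in>A. a + f a \<notin> E" "t + c \<notin> E"
  shows "basis_matched E (insert t A) (insert c (f ` A))"
  unfolding basis_matched_def
  using bij_betw_fun_upd_insert[OF assms(1-3)] assms(2,4,5) by (intro exI[of _ "f(t := c)"]) auto

lemma paving_basis_matched:
  assumes "matroid E I" "paving E I" "inj_on f A" "f ` A \<subseteq> E" "card A + 1 = mrank E I"
    and "t \<notin> A" "\<forall>a\<in>A. a + f a \<notin> X" "\<forall>b\<in>E. t + b \<notin> X"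
  shows "\<exists>B. is_basis E I B \<and> basis_matched X (insert t A) B"
proof -
  have card_fA: "card (f ` A) + 1 = mrank E I" using card_image[OF assms(3)] assms(5) by simp
  then have "I (f ` A)" using assms(2,4) unfolding paving_def by auto
  then obtain c where c: "c \<notin> f ` A" "is_basis E I (insert c (f ` A))"
    using card_fA by (rule indep_extend_to_basis[OF assms(1)])
  have "c \<in> E" using c(2) unfolding is_basis_def by blast
  then have "basis_matched X (insert t A) (insert c (f ` A))"
    using basis_matched_insert[OF assms(3,6) c(1) assms(7)] assms(8) by blast
  with c(2) show ?thesis by blast
qed

locale compatibly_ordered =
  fixes X Y :: "'a::ab_group_add set" and le :: "'a \<Rightarrow> 'a \<Rightarrow> bool"
  assumes finite_X: "finite X" and finite_Y: "finite Y"
    and total: "total_order_on (X \<union> Y \<union> sumset X Y \<union> {0}) le"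
    and compatible: "compatible_order (X \<union> Y \<union> sumset X Y \<union> {0}) le"
    and positive_Y: "positive_set le Y"
begin

lemma add_mem_sumset: "a \<in> X \<Longrightarrow> b \<in> Y \<Longrightarrow> a + b \<in> sumset X Y"
  unfolding sumset_def by blast

lemma le_refl: "x \<in> X \<Longrightarrow> le x x"
  using total unfolding total_order_on_def by blast

lemma le_antisym: "x \<in> X \<Longrightarrow> y \<in> X \<Longrightarrow> le x y \<Longrightarrow> le y x \<Longrightarrow> x = y"
  using total unfolding total_order_on_def by blast

lemma le_trans: "x \<in> X \<Longrightarrow> y \<in> X \<Longrightarrow> z \<in> X \<Longrightarrow> le x y \<Longrightarrow> le y z \<Longrightarrow> le x z"
  using total unfolding total_order_on_def by blast

lemma ex_greatest: "B \<subseteq> X \<Longrightarrow> B \<noteq> {} \<Longrightarrow> \<exists>t\<in>B. \<forall>x\<in>B. le x t"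
  using total_order_on_ex_greatest[OF total] finite_subset[OF _ finite_X] by blast

lemma le_add_positive:
  assumes "a \<in> X" "b \<in> Y"
  shows "le a (a + b)" "a + b \<noteq> a"
proof -
  have "le 0 b" "b \<noteq> 0" using positive_Y assms(2) unfolding positive_set_def by auto
  then have "le (0 + a) (b + a)"
    using compatible assms unfolding compatible_order_def by blast
  then show "le a (a + b)" by (simp add: add.commute)
  show "a + b \<noteq> a" using \<open>b \<noteq> 0\<close> by simp
qed

lemma card_le_card_add_notin:
  assumes "card Y = card X" "a \<in> X"
  shows "card {x \<in> X. le x a} \<le> card {b \<in> Y. a + b \<notin> X}"
proof -
  define above where "above = {x \<in> X. le a x \<and> x \<noteq> a}"
  have "(\<lambda>b. a + b) ` {b \<in> Y. a + b \<in> X} \<subseteq> above"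
    using le_add_positive assms(2) unfolding above_def by auto
  then have "card {b \<in> Y. a + b \<in> X} \<le> card above"
    using finite_X by (intro card_inj_on_le) (auto simp: above_def inj_on_def)
  moreover have "card {x \<in> X. le x a} + card above \<le> card X"
  proof -
    have "{x \<in> X. le x a} \<inter> above = {}"
      using le_antisym assms(2) unfolding above_def by blast
    then have "card ({x \<in> X. le x a} \<union> above) = card {x \<in> X. le x a} + card above"
      using finite_X unfolding above_def by (intro card_Un_disjoint) auto
    moreover have "card ({x \<in> X. le x a} \<union> above) \<le> card X"
      using finite_X unfolding above_def by (intro card_mono) auto
    ultimately show ?thesis by simp
  qed
  moreover have "card {b \<in> Y. a + b \<notin> X} + card {b \<in> Y. a + b \<in> X} = card Y"
  proof -
    have "card ({b \<in> Y. a + b \<notin> X} \<union> {b \<in> Y. a + b \<in> X})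
        = card {b \<in> Y. a + b \<notin> X} + card {b \<in> Y. a + b \<in> X}"
      using finite_Y by (intro card_Un_disjoint) auto
    moreover have "{b \<in> Y. a + b \<notin> X} \<union> {b \<in> Y. a + b \<in> X} = Y" by blast
    ultimately show ?thesis by simp
  qed
  ultimately show ?thesis using assms(1) by linarith
qed

lemma ex_inj_add_notin:
  assumes "card Y = card X"
  shows "\<exists>f. inj_on f X \<and> (\<forall>a\<in>X. f a \<in> Y \<and> a + f a \<notin> X)"
proof -
  have "X \<subseteq> X \<union> Y \<union> sumset X Y \<union> {0}" by blast
  from total_order_on_distinct_representatives[OF total finite_X this card_le_card_add_notin[OF assms]]
  show ?thesis by blast
qed

lemma greatest_add_notin:
  assumes "B \<subseteq> X" "card X = card B + 1" "t \<in> B" "\<forall>x\<in>B. le x t"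
    and "\<forall>m\<in>X. (\<forall>x\<in>X. le x m) \<longrightarrow> m \<notin> sumset X Y" "b \<in> Y"
  shows "t + b \<notin> X"
proof
  assume tb: "t + b \<in> X"
  have t: "t \<in> X" using assms(1,3) by blast
  have t_le: "le t (t + b)" and t_ne: "t + b \<noteq> t" using le_add_positive[OF t assms(6)] by auto
  have "t + b \<notin> B"
  proof
    assume "t + b \<in> B"
    then have "le (t + b) t" using assms(4) by blast
    then show False using le_antisym[OF t tb t_le] t_ne by simp
  qed
  moreover obtain e where "X - B = {e}"
  proof -
    have "card (X - B) = 1"
      using card_Diff_subset[OF finite_subset[OF assms(1) finite_X] assms(1)] assms(2) by simp
    then show thesis using that by (rule card_1_singletonE)
  qed
  ultimately have "X - B = {t + b}" using tb by (metis DiffI singletonD)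
  then have X_eq: "X = insert (t + b) B" using assms(1) by auto
  have "\<forall>x\<in>X. le x (t + b)"
    unfolding X_eq using le_refl[OF tb] le_trans[OF _ t tb _ t_le] assms(1,4) by blast
  then show False using assms(5) tb add_mem_sumset[OF t assms(6)] by blast
qed

end

theorem theorem2p10:
  fixes EM EN :: "'a::ab_group_add set"
    and IM IN :: "'a set \<Rightarrow> bool"
    and le :: "'a \<Rightarrow> 'a \<Rightarrow> bool"
    and n :: nat
  assumes "matroid EM IM" and "loopless EM IM"
    and "matroid EN IN" and "loopless EN IN"
    and "paving EN IN"
    and "mrank EM IM = n" and "mrank EN IN = n"
    and "card EM = n + 1" and "card EN = n + 1"
    and "enat (n + 1) < pG TYPE('a)"
    and "total_order_on (EM \<union> EN \<union> sumset EM EN \<union> {0}) le"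
    and "compatible_order (EM \<union> EN \<union> sumset EM EN \<union> {0}) le"
    and "positive_set le EM" and "positive_set le EN"
    and "\<forall>m\<in>EM. (\<forall>x\<in>EM. le x m) \<longrightarrow> m \<notin> sumset EM EN"
  shows "matroid_matched EM IM EN IN"
proof -
  interpret compatibly_ordered EM EN le
    using matroid_finite[OF assms(1)] matroid_finite[OF assms(3)] assms(11,12,14) by unfold_locales
  show ?thesis unfolding matroid_matched_def
  proof (intro allI impI)
    fix BM assume BM: "is_basis EM IM BM"
    have BM_sub: "BM \<subseteq> EM" using BM unfolding is_basis_def by blast
    have card_BM: "card BM = n" using card_basis[OF assms(1) BM] assms(6) by simp
    moreover have "0 < n" using mrank_pos[OF assms(1,2)] assms(6,8) by fastforce
    ultimately have "BM \<noteq> {}" by auto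
    then obtain t where t: "t \<in> BM" "\<forall>x\<in>BM. le x t" using ex_greatest[OF BM_sub] by blast
    obtain f where f: "inj_on f EM" "\<forall>a\<in>EM. f a \<in> EN \<and> a + f a \<notin> EM"
      using ex_inj_add_notin assms(8,9) by auto
    define A where "A = BM - {t}"
    have BM_eq: "BM = insert t A" and t_notin: "t \<notin> A" using t(1) unfolding A_def by blast+
    have inj_A: "inj_on f A" using inj_on_subset[OF f(1)] BM_sub unfolding A_def by blast
    have fA_sub: "f ` A \<subseteq> EN" and A_matched: "\<forall>a\<in>A. a + f a \<notin> EM"
      using f(2) BM_sub unfolding A_def by auto
    have card_A: "card A + 1 = mrank EN IN"
      using card_BM t_notin finite_subset[OF BM_sub finite_X] assms(7) unfolding BM_eq by simp
    have t_matched: "\<forall>b\<in>EN. t + b \<notin> EM"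
      using greatest_add_notin[OF BM_sub _ t assms(15)] assms(8) card_BM by simp
    show "\<exists>BN. is_basis EN IN BN \<and> basis_matched EM BM BN"
      unfolding BM_eq
      by (rule paving_basis_matched[OF assms(3,5) inj_A fA_sub card_A t_notin A_matched t_matched])
  qed
qed

end
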